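(* Let $K$ and $L$ be $n$-element finite sets, $M=K\times L$, and let $u=(u_{kl})$ be a unitary matrix indexed by $K\times L$ all of whose entries are nonzero. Then every eigenspace of the Berezin transform $I_u$ on $F(M)$ is invariant under pointwise complex conjugation $f\mapsto\bar f$. In particular, for any eigenvalue $\theta$ of $I_u$ of multiplicity $k$, the $\theta$-eigenspace, regarded as a real vector space, is the direct sum of the $k$-dimensional real vector space of real-valued $\theta$-eigenfunctions and the $k$-dimensional real vector space of purely imaginary $\theta$-eigenfunctions.
   Context: For a finite set $J$, $F(J)$ denotes the space of complex-valued functions on $J$. For $f=(f_{kl})\in F(M)$, $C_uf$ and $D_uf$ are the operators on $F(K)$ with matrices $x_{kk'}=\sum_{l\in L}u_{kl}f_{kl}\bar u_{k'l}$ and $y_{kk'}=\sum_{l\in L}u_{kl}f_{k'l}\bar u_{k'l}$ respectively; these maps $F(M)\to\operatorname{End}F(K)$ are linear bijections. The Berezin transform is $I_u:=C_u^{-1}D_u:F(M)\to F(M)$; explicitly $(I_uf)_{kl}=\sum_{k'\in K,l'\in L}\frac{u_{kl'}u_{k'l}}{u_{kl}u_{k'l'}}f_{k'l'}|u_{k'l'}|^2$. It is unitary with respect to $\langle f,g\rangle_u=\sum_{k,l}f_{kl}\bar g_{kl}|u_{kl}|^2$. *)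

theory Defs
  imports "HOL-Analysis.Analysis"
begin

text \<open>K and L are modelled as finite types 'k and 'l; functions on M = K x L are
  vectors of type complex ^ ('k \<times> 'l). The matrix u is u k l.\<close>

definition unitary_mat :: "('k::finite \<Rightarrow> 'l::finite \<Rightarrow> complex) \<Rightarrow> bool" where
  "unitary_mat u \<longleftrightarrow>
     (\<forall>k k'. (\<Sum>l\<in>UNIV. u k l * cnj (u k' l)) = (if k = k' then 1 else 0)) \<and>
     (\<forall>l l'. (\<Sum>k\<in>UNIV. cnj (u k l) * u k l') = (if l = l' then 1 else 0))"

definition berezin ::
  "('k::finite \<Rightarrow> 'l::finite \<Rightarrow> complex) \<Rightarrow> complex ^ ('k \<times> 'l) \<Rightarrow> complex ^ ('k \<times> 'l)" where
  "berezin u f = (\<chi> x. case x of (k, l) \<Rightarrow>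
     (\<Sum>k'\<in>UNIV. \<Sum>l'\<in>UNIV.
        (u k l' * u k' l) / (u k l * u k' l') * f $ (k', l') * complex_of_real ((cmod (u k' l')) ^ 2)))"

definition berezin_eigenspace ::
  "('k::finite \<Rightarrow> 'l::finite \<Rightarrow> complex) \<Rightarrow> complex \<Rightarrow> (complex ^ ('k \<times> 'l)) set" where
  "berezin_eigenspace u \<theta> = {f. berezin u f = \<theta> *s f}"

definition conj_fun :: "complex ^ 'm \<Rightarrow> complex ^ 'm" where
  "conj_fun f = (\<chi> x. cnj (f $ x))"

end

theory Submission
  imports Defs
begin

text \<open>Put \<open>J h = conj (I\<^sub>u (conj h))\<close>. The kernel of \<open>I\<^sub>u\<close> is symmetric under
  \<open>(k, l) \<leftrightarrow> (k', l')\<close>, so \<open>J\<close> is the adjoint of \<open>I\<^sub>u\<close> for \<open>\<langle>-,-\<rangle>\<^sub>u\<close>, and the unitarity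
  of \<open>u\<close> makes \<open>J\<close> a left inverse of \<open>I\<^sub>u\<close>. For an eigenfunction \<open>I\<^sub>u f = \<theta> f\<close> this gives
  \<open>J f = \<theta>\<inverse> f\<close> and \<open>\<theta> \<langle>f,f\<rangle>\<^sub>u = \<langle>f, J f\<rangle>\<^sub>u = conj (\<theta>\<inverse>) \<langle>f,f\<rangle>\<^sub>u\<close>, hence \<open>\<theta>\<inverse> = conj \<theta>\<close>
  and \<open>J f = conj \<theta> f\<close>, i.e. \<open>I\<^sub>u (conj f) = \<theta> conj f\<close>.
  A complex subspace closed under conjugation is spanned over \<open>\<complex>\<close> by its real-valued part,
  and a real basis of that part stays independent over \<open>\<complex>\<close>; multiplication by \<open>\<i>\<close> maps the
  real-valued part onto the purely imaginary one.\<close>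

lemma conj_fun_nth [simp]: "conj_fun f $ x = cnj (f $ x)"
  by (simp add: conj_fun_def)

lemma conj_fun_conj_fun [simp]: "conj_fun (conj_fun f) = f"
  by (simp add: vec_eq_iff)

lemma conj_fun_smult [simp]: "conj_fun (c *s f) = cnj c *s conj_fun f"
  by (simp add: vec_eq_iff)

lemma conj_fun_zero [simp]: "conj_fun 0 = 0"
  by (simp add: vec_eq_iff)

lemma sum_swap_pairs:
  "(\<Sum>a\<in>A. \<Sum>b\<in>B. \<Sum>c\<in>C. \<Sum>d\<in>D. F a b c d) = (\<Sum>c\<in>C. \<Sum>d\<in>D. \<Sum>a\<in>A. \<Sum>b\<in>B. F a b c d)"
proof -
  have "(\<Sum>a\<in>A. \<Sum>b\<in>B. \<Sum>c\<in>C. \<Sum>d\<in>D. F a b c d) = (\<Sum>a\<in>A. \<Sum>c\<in>C. \<Sum>b\<in>B. \<Sum>d\<in>D. F a b c d)"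
    by (rule sum.cong[OF refl], rule sum.swap)
  also have "\<dots> = (\<Sum>c\<in>C. \<Sum>a\<in>A. \<Sum>d\<in>D. \<Sum>b\<in>B. F a b c d)"
    by (subst sum.swap) (rule sum.cong[OF refl], rule sum.cong[OF refl], rule sum.swap)
  also have "\<dots> = (\<Sum>c\<in>C. \<Sum>d\<in>D. \<Sum>a\<in>A. \<Sum>b\<in>B. F a b c d)"
    by (rule sum.cong[OF refl], rule sum.swap)
  finally show ?thesis .
qed

lemma berezin_apply:
  "berezin u f $ (k, l) = (\<Sum>k'\<in>UNIV. \<Sum>l'\<in>UNIV.
     u k l' * u k' l / (u k l * u k' l') * f $ (k', l') * complex_of_real ((cmod (u k' l'))\<^sup>2))"
  by (simp add: berezin_def)

lemma berezin_add: "berezin u (f + g) = berezin u f + berezin u g"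
  by (simp add: vec_eq_iff berezin_apply sum.distrib[symmetric] distrib_left distrib_right
      split: prod.splits)

lemma berezin_smult: "berezin u (c *s f) = c *s berezin u f"
  by (simp add: vec_eq_iff berezin_def sum_distrib_left algebra_simps split: prod.splits)

lemma berezin_zero [simp]: "berezin u 0 = 0"
  using berezin_smult[of u 0 0] by simp

lemma mult_berezin_apply:
  assumes "\<forall>k l. u k l \<noteq> 0"
  shows "u k l * berezin u f $ (k, l) =
    (\<Sum>k'\<in>UNIV. \<Sum>l'\<in>UNIV. u k l' * u k' l * cnj (u k' l') * f $ (k', l'))"
  unfolding berezin_apply sum_distrib_left complex_norm_square
  using assms by (intro sum.cong refl) (simp add: field_simps)

definition berezin_conj ::
  "('k::finite \<Rightarrow> 'l::finite \<Rightarrow> complex) \<Rightarrow> complex ^ ('k \<times> 'l) \<Rightarrow> complex ^ ('k \<times> 'l)"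
  where "berezin_conj u h = conj_fun (berezin u (conj_fun h))"

lemma berezin_conj_smult: "berezin_conj u (c *s h) = c *s berezin_conj u h"
  by (simp add: berezin_conj_def berezin_smult)

lemma cnj_mult_berezin_conj_apply:
  assumes "\<forall>k l. u k l \<noteq> 0"
  shows "cnj (u k l) * berezin_conj u h $ (k, l) =
    (\<Sum>k'\<in>UNIV. \<Sum>l'\<in>UNIV. cnj (u k l') * cnj (u k' l) * u k' l' * h $ (k', l'))"
proof -
  have "cnj (u k l) * berezin_conj u h $ (k, l) = cnj (u k l * berezin u (conj_fun h) $ (k, l))"
    by (simp add: berezin_conj_def)
  also have "\<dots> = (\<Sum>k'\<in>UNIV. \<Sum>l'\<in>UNIV. cnj (u k l') * cnj (u k' l) * u k' l' * h $ (k', l'))"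
    by (simp add: mult_berezin_apply[OF assms])
  finally show ?thesis .
qed

lemma berezin_conj_berezin:
  assumes "unitary_mat u" and nonzero: "\<forall>k l. u k l \<noteq> 0"
  shows "berezin_conj u (berezin u g) = g"
proof -
  have rows: "(\<Sum>l\<in>UNIV. u k l * cnj (u k' l)) = (if k = k' then 1 else 0)"
   and cols: "(\<Sum>k\<in>UNIV. cnj (u k l) * u k l') = (if l = l' then 1 else 0)" for k k' l l'
    using assms(1) unfolding unitary_mat_def by auto
  have "cnj (u k l) * berezin_conj u (berezin u g) $ (k, l) = cnj (u k l) * g $ (k, l)" for k l
  proof -
    have "cnj (u k l) * berezin_conj u (berezin u g) $ (k, l) =
      (\<Sum>k'\<in>UNIV. \<Sum>l'\<in>UNIV. \<Sum>k''\<in>UNIV. \<Sum>l''\<in>UNIV.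
        cnj (u k l') * cnj (u k' l) * (u k' l'' * u k'' l' * cnj (u k'' l'') * g $ (k'', l'')))"
      by (simp add: cnj_mult_berezin_conj_apply[OF nonzero] mult.assoc
          mult_berezin_apply[OF nonzero] sum_distrib_left)
    also have "\<dots> = (\<Sum>k''\<in>UNIV. \<Sum>l''\<in>UNIV. \<Sum>k'\<in>UNIV. \<Sum>l'\<in>UNIV.
        cnj (u k l') * cnj (u k' l) * (u k' l'' * u k'' l' * cnj (u k'' l'') * g $ (k'', l'')))"
      by (rule sum_swap_pairs)
    also have "\<dots> = (\<Sum>k''\<in>UNIV. \<Sum>l''\<in>UNIV. cnj (u k'' l'') * g $ (k'', l'') *
        ((\<Sum>k'\<in>UNIV. cnj (u k' l) * u k' l'') * (\<Sum>l'\<in>UNIV. u k'' l' * cnj (u k l'))))"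
      by (simp only: sum_product) (simp only: sum_distrib_left, simp add: mult_ac)
    also have "\<dots> = (\<Sum>k''\<in>UNIV. \<Sum>l''\<in>UNIV.
        if k'' = k then if l'' = l then cnj (u k l) * g $ (k, l) else 0 else 0)"
      by (auto simp: rows cols intro!: sum.cong)
    also have "\<dots> = cnj (u k l) * g $ (k, l)"
      by (subst sum.swap) simp
    finally show ?thesis .
  qed
  then show ?thesis
    using nonzero by (simp add: vec_eq_iff)
qed

definition berezin_inner ::
  "('k::finite \<Rightarrow> 'l::finite \<Rightarrow> complex) \<Rightarrow> complex ^ ('k \<times> 'l) \<Rightarrow> complex ^ ('k \<times> 'l) \<Rightarrow> complex"
  where "berezin_inner u f g =
    (\<Sum>k\<in>UNIV. \<Sum>l\<in>UNIV. f $ (k, l) * cnj (g $ (k, l)) * complex_of_real ((cmod (u k l))\<^sup>2))"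

lemma berezin_inner_smult_left: "berezin_inner u (c *s f) g = c * berezin_inner u f g"
  by (simp add: berezin_inner_def sum_distrib_left mult.assoc)

lemma berezin_inner_smult_right: "berezin_inner u f (c *s g) = cnj c * berezin_inner u f g"
  by (simp add: berezin_inner_def sum_distrib_left mult_ac)

lemma berezin_inner_berezin:
  "berezin_inner u (berezin u g) h = berezin_inner u g (berezin_conj u h)"
proof -
  define A where "A k l k' l' = u k l' * u k' l / (u k l * u k' l')" for k l k' l'
  define w where "w k l = complex_of_real ((cmod (u k l))\<^sup>2)" for k l
  have "berezin_inner u (berezin u g) h = (\<Sum>k\<in>UNIV. \<Sum>l\<in>UNIV. \<Sum>k'\<in>UNIV. \<Sum>l'\<in>UNIV.
      A k l k' l' * g $ (k', l') * w k' l' * (cnj (h $ (k, l)) * w k l))"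
    unfolding berezin_inner_def berezin_apply A_def w_def by (simp add: sum_distrib_right mult.assoc)
  also have "\<dots> = (\<Sum>k'\<in>UNIV. \<Sum>l'\<in>UNIV. \<Sum>k\<in>UNIV. \<Sum>l\<in>UNIV.
      g $ (k', l') * (A k' l' k l * cnj (h $ (k, l)) * w k l) * w k' l')"
    by (subst sum_swap_pairs) (intro sum.cong refl, simp add: A_def mult_ac)
  also have "\<dots> = berezin_inner u g (berezin_conj u h)"
    unfolding berezin_inner_def berezin_conj_def A_def w_def
    by (simp add: berezin_apply sum_distrib_right sum_distrib_left mult.assoc)
  finally show ?thesis .
qed

lemma berezin_inner_self_nonzero:
  assumes "\<forall>k l. u k l \<noteq> 0" and "f \<noteq> 0"
  shows "berezin_inner u f f \<noteq> 0"
proof -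
  define S where "S k l = (cmod (f $ (k, l)))\<^sup>2 * (cmod (u k l))\<^sup>2" for k l
  have S_nonneg: "S k l \<ge> 0" for k l
    by (simp add: S_def)
  obtain k l where "f $ (k, l) \<noteq> 0"
    using assms(2) by (auto simp: vec_eq_iff)
  then have "S k l > 0"
    using assms(1) by (simp add: S_def)
  then have "(\<Sum>k\<in>UNIV. \<Sum>l\<in>UNIV. S k l) > 0"
    by (intro sum_pos2[of _ k] sum_pos2[of _ l] sum_nonneg S_nonneg) auto
  moreover have "berezin_inner u f f = (\<Sum>k\<in>UNIV. \<Sum>l\<in>UNIV. complex_of_real (S k l))"
    unfolding berezin_inner_def S_def
    by (intro sum.cong refl) (simp only: complex_norm_square[symmetric] of_real_mult)
  then have "berezin_inner u f f = complex_of_real (\<Sum>k\<in>UNIV. \<Sum>l\<in>UNIV. S k l)"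
    by simp
  ultimately show ?thesis
    by (metis of_real_eq_0_iff less_irrefl)
qed

lemma berezin_conj_eigenvector:
  assumes "unitary_mat u" and nonzero: "\<forall>k l. u k l \<noteq> 0"
    and eigen: "berezin u f = \<theta> *s f" and "f \<noteq> 0"
  shows "berezin_conj u f = cnj \<theta> *s f"
proof -
  have f_eq: "f = \<theta> *s berezin_conj u f"
    using berezin_conj_berezin[OF assms(1,2), of f] by (simp add: eigen berezin_conj_smult)
  then have "\<theta> \<noteq> 0"
    using \<open>f \<noteq> 0\<close> by auto
  have inverse: "berezin_conj u f = inverse \<theta> *s f"
    using \<open>\<theta> \<noteq> 0\<close> by (subst f_eq) simp
  have "\<theta> * berezin_inner u f f = berezin_inner u (berezin u f) f"
    by (simp add: eigen berezin_inner_smult_left)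
  also have "\<dots> = cnj (inverse \<theta>) * berezin_inner u f f"
    by (simp add: berezin_inner_berezin inverse berezin_inner_smult_right)
  finally have "\<theta> = cnj (inverse \<theta>)"
    using berezin_inner_self_nonzero[OF nonzero \<open>f \<noteq> 0\<close>] by simp
  then show ?thesis
    using inverse by (metis complex_cnj_cnj complex_cnj_inverse)
qed

lemma berezin_eigenspace_conj_fun:
  assumes "unitary_mat u" and "\<forall>k l. u k l \<noteq> 0" and "f \<in> berezin_eigenspace u \<theta>"
  shows "conj_fun f \<in> berezin_eigenspace u \<theta>"
proof (cases "f = 0")
  case False
  then have "berezin_conj u f = cnj \<theta> *s f"
    using assms berezin_conj_eigenvector unfolding berezin_eigenspace_def by blast
  then have "conj_fun (berezin_conj u f) = \<theta> *s conj_fun f"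
    by simp
  then show ?thesis
    by (simp add: berezin_eigenspace_def berezin_conj_def)
qed (simp add: berezin_eigenspace_def)

lemma vec_subspace_berezin_eigenspace: "vec.subspace (berezin_eigenspace u \<theta>)"
  by (auto simp: vec.subspace_def berezin_eigenspace_def berezin_add berezin_smult mult.commute)

definition vec_Re :: "complex ^ 'n \<Rightarrow> complex ^ 'n"
  where "vec_Re f = (\<chi> x. complex_of_real (Re (f $ x)))"

definition vec_Im :: "complex ^ 'n \<Rightarrow> complex ^ 'n"
  where "vec_Im f = (\<chi> x. complex_of_real (Im (f $ x)))"

lemma vec_Re_eq_conj_fun: "vec_Re f = (1 / 2) *s (f + conj_fun f)"
  by (simp add: vec_eq_iff vec_Re_def complex_eq_iff)

lemma vec_Im_eq_conj_fun: "vec_Im f = (- \<i> / 2) *s (f - conj_fun f)"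
  by (simp add: vec_eq_iff vec_Im_def complex_eq_iff)

lemma vec_Re_add_Im: "vec_Re f + \<i> *s vec_Im f = f"
  by (simp add: vec_eq_iff vec_Re_def vec_Im_def complex_eq_iff)

lemma scaleR_eq_smult: "c *\<^sub>R f = complex_of_real c *s (f :: complex ^ 'n)"
  unfolding vec_eq_iff vector_scaleR_component vector_smult_component
  by (simp add: scaleR_conv_of_real)

lemma span_subset_vec_span: "span B \<subseteq> vec.span (B :: (complex ^ 'n) set)"
  by (rule span_minimal)
    (auto simp: subspace_def scaleR_eq_smult vec.span_base vec.span_zero vec.span_add vec.span_scale)

lemma vec_Re_sum_smult_real_valued:
  assumes "\<forall>w\<in>t. \<forall>x. Im (w $ x) = 0"
  shows "vec_Re (\<Sum>w\<in>t. c w *s w) = (\<Sum>w\<in>t. Re (c w) *\<^sub>R w)"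
    and "vec_Im (\<Sum>w\<in>t. c w *s w) = (\<Sum>w\<in>t. Im (c w) *\<^sub>R w)"
  using assms by (auto simp: vec_eq_iff vec_Re_def vec_Im_def complex_eq_iff
      intro!: sum.cong)

lemma vec_independent_if_real_valued:
  assumes "independent B" and real_valued: "\<forall>b\<in>B. \<forall>x. Im (b $ x) = 0"
  shows "vec.independent B"
  unfolding vec.independent_explicit_module
proof (intro allI impI)
  fix t c v
  assume t: "finite t" "t \<subseteq> B" and sum: "(\<Sum>v\<in>t. c v *s v) = 0" and "v \<in> t"
  have real_t: "\<forall>w\<in>t. \<forall>x. Im (w $ x) = 0"
    using t real_valued by blast
  have "(\<Sum>w\<in>t. Re (c w) *\<^sub>R w) = vec_Re (\<Sum>w\<in>t. c w *s w)"
   and "(\<Sum>w\<in>t. Im (c w) *\<^sub>R w) = vec_Im (\<Sum>w\<in>t. c w *s w)"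
    by (fact vec_Re_sum_smult_real_valued[OF real_t, symmetric])+
  then have Re_0: "(\<Sum>w\<in>t. Re (c w) *\<^sub>R w) = 0" and Im_0: "(\<Sum>w\<in>t. Im (c w) *\<^sub>R w) = 0"
    unfolding sum by (simp_all add: vec_eq_iff vec_Re_def vec_Im_def)
  have coeff_0: "\<And>a. (\<Sum>w\<in>t. a w *\<^sub>R w) = 0 \<Longrightarrow> a v = 0"
    using assms(1) t \<open>v \<in> t\<close> unfolding independent_explicit_module by blast
  from coeff_0[OF Re_0] coeff_0[OF Im_0] show "c v = 0"
    by (simp add: complex_eq_iff)
qed

definition real_valued_part :: "(complex ^ 'n) set \<Rightarrow> (complex ^ 'n) set"
  where "real_valued_part E = {f \<in> E. \<forall>x. Im (f $ x) = 0}"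

definition imaginary_valued_part :: "(complex ^ 'n) set \<Rightarrow> (complex ^ 'n) set"
  where "imaginary_valued_part E = {f \<in> E. \<forall>x. Re (f $ x) = 0}"

lemma subspace_real_valued_part: "vec.subspace E \<Longrightarrow> subspace (real_valued_part E)"
  by (auto simp: subspace_def vec.subspace_def real_valued_part_def scaleR_eq_smult)

lemma subspace_imaginary_valued_part: "vec.subspace E \<Longrightarrow> subspace (imaginary_valued_part E)"
  by (auto simp: subspace_def vec.subspace_def imaginary_valued_part_def scaleR_eq_smult)

lemma real_valued_part_Int_imaginary_valued_part:
  "vec.subspace E \<Longrightarrow> real_valued_part E \<inter> imaginary_valued_part E = {0}"
  by (auto simp: vec.subspace_0 real_valued_part_def imaginary_valued_part_def vec_eq_iff complex_eq_iff)

lemma imaginary_valued_part_eq_image: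
  assumes "vec.subspace E"
  shows "imaginary_valued_part E = (\<lambda>f. \<i> *s f) ` real_valued_part E"
proof
  show "(\<lambda>f. \<i> *s f) ` real_valued_part E \<subseteq> imaginary_valued_part E"
    using assms by (auto simp: real_valued_part_def imaginary_valued_part_def vec.subspace_scale)
  show "imaginary_valued_part E \<subseteq> (\<lambda>f. \<i> *s f) ` real_valued_part E"
  proof
    fix f assume "f \<in> imaginary_valued_part E"
    then have "(- \<i>) *s f \<in> real_valued_part E"
      using assms by (auto simp: real_valued_part_def imaginary_valued_part_def vec.subspace_scale
          vec.subspace_neg)
    moreover have "f = \<i> *s ((- \<i>) *s f)"
      by simp
    ultimately show "f \<in> (\<lambda>f. \<i> *s f) ` real_valued_part E"
      by blast
  qed
qed

lemma vec_Re_Im_mem_real_valued_part: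
  assumes "vec.subspace E" and "\<And>f. f \<in> E \<Longrightarrow> conj_fun f \<in> E" and "f \<in> E"
  shows "vec_Re f \<in> real_valued_part E" and "vec_Im f \<in> real_valued_part E"
proof -
  have "vec_Re f \<in> E" and "vec_Im f \<in> E"
    unfolding vec_Re_eq_conj_fun vec_Im_eq_conj_fun
    using assms by (simp_all add: vec.subspace_add vec.subspace_diff vec.subspace_scale)
  then show "vec_Re f \<in> real_valued_part E" and "vec_Im f \<in> real_valued_part E"
    by (simp_all add: real_valued_part_def vec_Re_def vec_Im_def)
qed

lemma sums_real_imaginary_valued_part:
  assumes "vec.subspace E" and "\<And>f. f \<in> E \<Longrightarrow> conj_fun f \<in> E"
  shows "{r + i | r i. r \<in> real_valued_part E \<and> i \<in> imaginary_valued_part E} = E"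
proof
  show "{r + i | r i. r \<in> real_valued_part E \<and> i \<in> imaginary_valued_part E} \<subseteq> E"
    using assms(1) by (auto simp: real_valued_part_def imaginary_valued_part_def vec.subspace_add)
  show "E \<subseteq> {r + i | r i. r \<in> real_valued_part E \<and> i \<in> imaginary_valued_part E}"
  proof
    fix f assume "f \<in> E"
    then have "vec_Re f \<in> real_valued_part E" and "\<i> *s vec_Im f \<in> imaginary_valued_part E"
      using vec_Re_Im_mem_real_valued_part[OF assms] imaginary_valued_part_eq_image[OF assms(1)]
      by blast+
    then show "f \<in> {r + i | r i. r \<in> real_valued_part E \<and> i \<in> imaginary_valued_part E}"
      using vec_Re_add_Im[of f, symmetric] by blast
  qed
qed

lemma dim_real_valued_part:
  assumes "vec.subspace E" and "\<And>f. f \<in> E \<Longrightarrow> conj_fun f \<in> E"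
  shows "dim (real_valued_part E) = vec.dim E"
proof -
  obtain B where B: "B \<subseteq> real_valued_part E" "independent B" "real_valued_part E \<subseteq> span B"
    and card_B: "card B = dim (real_valued_part E)"
    using basis_exists by blast
  have "vec.dim E = card B"
  proof (rule vec.dim_unique)
    show "B \<subseteq> E"
      using B(1) by (auto simp: real_valued_part_def)
    show "E \<subseteq> vec.span B"
    proof
      fix f assume "f \<in> E"
      then have "vec_Re f \<in> vec.span B" and "vec_Im f \<in> vec.span B"
        using vec_Re_Im_mem_real_valued_part[OF assms] B(3) span_subset_vec_span by blast+
      then show "f \<in> vec.span B"
        by (metis vec_Re_add_Im vec.span_add vec.span_scale)
    qed
    show "vec.independent B"
      using B(1) by (intro vec_independent_if_real_valued[OF B(2)]) (auto simp: real_valued_part_def)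
  qed simp
  then show ?thesis
    using card_B by simp
qed

lemma dim_imaginary_valued_part:
  fixes E :: "(complex ^ 'n) set"
  assumes "vec.subspace E"
  shows "dim (imaginary_valued_part E) = dim (real_valued_part E)"
proof -
  have "linear (\<lambda>f::complex ^ 'n. \<i> *s f)"
    by (rule linearI) (auto simp: vec_eq_iff)
  moreover have "inj_on (\<lambda>f::complex ^ 'n. \<i> *s f) (span (real_valued_part E))"
    by (auto simp: inj_on_def)
  ultimately show ?thesis
    unfolding imaginary_valued_part_eq_image[OF assms] by (rule dim_image_eq)
qed

theorem lemma2p4:
  fixes u :: "'k::finite \<Rightarrow> 'l::finite \<Rightarrow> complex"
  assumes "CARD('k) = CARD('l)"
    and "unitary_mat u"
    and "\<forall>k l. u k l \<noteq> 0"
  shows "(\<forall>\<theta> f. f \<in> berezin_eigenspace u \<theta> \<longrightarrow> conj_fun f \<in> berezin_eigenspace u \<theta>) \<and>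
         (\<forall>\<theta> m. vec.dim (berezin_eigenspace u \<theta>) = m \<longrightarrow>
            (let E = berezin_eigenspace u \<theta>;
                 R = {f \<in> E. \<forall>x. Im (f $ x) = 0};
                 I = {f \<in> E. \<forall>x. Re (f $ x) = 0}
             in subspace R \<and> subspace I \<and> R \<inter> I = {0} \<and>
                {r + i | r i. r \<in> R \<and> i \<in> I} = E \<and>
                dim R = m \<and> dim I = m))"
proof -
  note subspace = vec_subspace_berezin_eigenspace[of u]
  note conj_closed = berezin_eigenspace_conj_fun[OF assms(2,3)]
  show ?thesis
    using conj_closed subspace_real_valued_part[OF subspace] subspace_imaginary_valued_part[OF subspace]
      real_valued_part_Int_imaginary_valued_part[OF subspace]
      sums_real_imaginary_valued_part[OF subspace conj_closed]
      dim_real_valued_part[OF subspace conj_closed] dim_imaginary_valued_part[OF subspace]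
    unfolding Let_def real_valued_part_def imaginary_valued_part_def by simp
qed

end
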